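(* Let $k\ge 2$ be an integer. The class of finite simple graphs admitting a closed neighborhood balanced $k$-coloring is not hereditary; that is, there exist a graph $H$ admitting a closed neighborhood balanced $k$-coloring and an induced subgraph of $H$ that admits no closed neighborhood balanced $k$-coloring.
   Context: For a vertex $v$ of a graph $G$, $N[v]=\{v\}\cup\{u : uv\in E(G)\}$ is its closed neighborhood. For an integer $k\ge 2$, a closed neighborhood balanced $k$-coloring of $G$ is a map $c: V(G)\to\{1,2,\dots,k\}$ such that for every vertex $v$ the numbers $|\{u\in N[v] : c(u)=i\}|$, $i=1,\dots,k$, are all equal. A class of graphs is hereditary if it is closed under taking induced subgraphs. *)

theory Defs
  imports Main
begin

definition simple_graph :: "'a set \<Rightarrow> ('a \<Rightarrow> 'a \<Rightarrow> bool) \<Rightarrow> bool" where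
  "simple_graph V E \<longleftrightarrow> finite V
     \<and> (\<forall>u v. E u v \<longrightarrow> u \<in> V \<and> v \<in> V)
     \<and> (\<forall>u v. E u v \<longrightarrow> E v u)
     \<and> (\<forall>v. \<not> E v v)"

definition closed_nbhd :: "'a set \<Rightarrow> ('a \<Rightarrow> 'a \<Rightarrow> bool) \<Rightarrow> 'a \<Rightarrow> 'a set" where
  "closed_nbhd V E v = {v} \<union> {u \<in> V. E u v}"

definition cnb_coloring :: "'a set \<Rightarrow> ('a \<Rightarrow> 'a \<Rightarrow> bool) \<Rightarrow> nat \<Rightarrow> ('a \<Rightarrow> nat) \<Rightarrow> bool" where
  "cnb_coloring V E k c \<longleftrightarrow> (\<forall>v\<in>V. c v \<in> {1..k})
     \<and> (\<forall>v\<in>V. \<forall>i\<in>{1..k}. \<forall>j\<in>{1..k}.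
          card {u \<in> closed_nbhd V E v. c u = i} = card {u \<in> closed_nbhd V E v. c u = j})"

definition has_cnb_coloring :: "'a set \<Rightarrow> ('a \<Rightarrow> 'a \<Rightarrow> bool) \<Rightarrow> nat \<Rightarrow> bool" where
  "has_cnb_coloring V E k \<longleftrightarrow> (\<exists>c. cnb_coloring V E k c)"

definition induced_edges :: "('a \<Rightarrow> 'a \<Rightarrow> bool) \<Rightarrow> 'a set \<Rightarrow> 'a \<Rightarrow> 'a \<Rightarrow> bool" where
  "induced_edges E W = (\<lambda>u v. E u v \<and> u \<in> W \<and> v \<in> W)"

end

theory Submission
  imports Defs
begin

text \<open>A balanced colouring splits every closed neighbourhood into k colour classes of equal
size, so k divides the size of every closed neighbourhood. A single vertex has closed
neighbourhood of size 1 and so admits no balanced k-colouring for k \<ge> 2, while the complete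
graph on k vertices, coloured injectively, has every closed neighbourhood equal to the whole
vertex set and hence one vertex of each colour in it.\<close>

lemma closed_nbhd_subset:
  assumes "v \<in> V"
  shows "closed_nbhd V E v \<subseteq> V"
  using assms unfolding closed_nbhd_def by auto

lemma cnb_coloring_dvd_card_closed_nbhd:
  assumes c: "cnb_coloring V E k c" and "finite V" and "v \<in> V"
  shows "k dvd card (closed_nbhd V E v)"
proof -
  define N where "N = closed_nbhd V E v"
  define colour_class where "colour_class i = {u \<in> N. c u = i}" for i
  have "N \<subseteq> V"
    unfolding N_def using \<open>v \<in> V\<close> by (rule closed_nbhd_subset)
  with \<open>finite V\<close> have "finite N"
    by (rule finite_subset[rotated])
  have colours: "c u \<in> {1..k}" if "u \<in> V" for u
    using c that unfolding cnb_coloring_def by blast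
  have equal_classes: "card (colour_class i) = card (colour_class (c v))" if "i \<in> {1..k}" for i
    using c that colours[OF \<open>v \<in> V\<close>] \<open>v \<in> V\<close>
    unfolding cnb_coloring_def colour_class_def N_def by blast
  have "N = (\<Union>i\<in>{1..k}. colour_class i)"
    using \<open>N \<subseteq> V\<close> colours unfolding colour_class_def by blast
  then have "card N = card (\<Union>i\<in>{1..k}. colour_class i)"
    by (rule arg_cong)
  also have "\<dots> = (\<Sum>i\<in>{1..k}. card (colour_class i))"
    using \<open>finite N\<close> by (intro card_UN_disjoint) (auto simp: colour_class_def)
  also have "\<dots> = k * card (colour_class (c v))"
    using equal_classes by simp
  finally show ?thesis
    unfolding N_def by simp
qed

lemma single_vertex_no_cnb_coloring:
  assumes "k \<ge> 2"
  shows "\<not> has_cnb_coloring {v} E k"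
proof
  assume "has_cnb_coloring {v} E k"
  then obtain c where "cnb_coloring {v} E k c"
    unfolding has_cnb_coloring_def by blast
  then have "k dvd card (closed_nbhd {v} E v)"
    by (rule cnb_coloring_dvd_card_closed_nbhd) simp_all
  moreover have "closed_nbhd {v} E v = {v}"
    unfolding closed_nbhd_def by auto
  ultimately show False
    using assms by simp
qed

definition complete_edges :: "'a set \<Rightarrow> 'a \<Rightarrow> 'a \<Rightarrow> bool" where
  "complete_edges V u v \<longleftrightarrow> u \<in> V \<and> v \<in> V \<and> u \<noteq> v"

lemma simple_graph_complete:
  assumes "finite V"
  shows "simple_graph V (complete_edges V)"
  using assms unfolding simple_graph_def complete_edges_def by auto

lemma closed_nbhd_complete:
  assumes "v \<in> V"
  shows "closed_nbhd V (complete_edges V) v = V"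
  using assms unfolding closed_nbhd_def complete_edges_def by auto

lemma cnb_coloring_complete:
  assumes c: "bij_betw c V {1..k}"
  shows "cnb_coloring V (complete_edges V) k c"
proof -
  have "card {u \<in> V. c u = i} = 1" if "i \<in> {1..k}" for i
  proof -
    obtain w where "w \<in> V" "c w = i"
      using c \<open>i \<in> {1..k}\<close> by (metis bij_betw_def imageE)
    then have "{u \<in> V. c u = i} = {w}"
      using c by (auto simp: bij_betw_def inj_on_def)
    then show ?thesis
      by simp
  qed
  moreover have "c v \<in> {1..k}" if "v \<in> V" for v
    using c that by (auto simp: bij_betw_def)
  ultimately show ?thesis
    unfolding cnb_coloring_def by (simp add: closed_nbhd_complete)
qed

theorem corollary2p7:
  fixes k :: nat
  assumes "k \<ge> 2"
  shows "\<exists>(V :: nat set) E W. simple_graph V E \<and> has_cnb_coloring V E k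
           \<and> W \<subseteq> V \<and> \<not> has_cnb_coloring W (induced_edges E W) k"
proof (intro exI conjI)
  let ?V = "{0..<k}"
  show "simple_graph ?V (complete_edges ?V)"
    by (simp add: simple_graph_complete)
  have "bij_betw Suc ?V {1..k}"
    by (simp add: bij_betw_def atLeastLessThanSuc_atLeastAtMost[symmetric] flip: image_Suc_atLeastLessThan)
  then show "has_cnb_coloring ?V (complete_edges ?V) k"
    unfolding has_cnb_coloring_def by (blast intro: cnb_coloring_complete)
  show "{0} \<subseteq> ?V"
    using assms by simp
  show "\<not> has_cnb_coloring {0} (induced_edges (complete_edges ?V) {0}) k"
    using assms by (rule single_vertex_no_cnb_coloring)
qed

end
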